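(* Let $X=\mathbb P(1,\dots,1,r)=\operatorname{Proj}k[x_0,\dots,x_{n-1},y]$ with $\deg x_i=1$, $\deg y=r>1$, and let $d$ be a positive multiple of $r$. Then \[\mathrm{Aut}_{gr}(S)\cong(GL_n\times\mathbb G_m)\ltimes\mathbb G_a^L,\qquad L=\binom{n-1+r}{r},\] so the unipotent radical $U\cong\mathbb G_a^L$ is abelian. Moreover, for any $N>0$ the action of $\hat U=\lambda_{g,N}(\mathbb G_m)\ltimes U$ on $\mathcal Y_d$ with respect to $\mathcal O(1)$ satisfies condition $(\mathfrak C^* )$: $\mathrm{Stab}_U([f])=\{e\}$ for every $[f]\in Z_{\min}$ (here $Z_{\min}=\{[y^{d/r}]\}$).
   Context: Work over an algebraically closed field $k$ of characteristic $0$. $S$ is the weighted polynomial ring above, $\mathrm{Aut}_{gr}(S)$ its group of graded $k$-algebra automorphisms, $\mathcal Y_d=\mathbb P(S_d)$ with $g\cdot[f]=[g(f)]$. For $N>0$, $\lambda_{g,N}(t)$: $x_i\mapsto t^{-N}x_i$, $y\mapsto ty$, and $\hat U=\lambda_{g,N}(\mathbb G_m)\ltimes U$. $Z_{\min}=\mathbb P(V_{\min})\subset\mathcal Y_d$ where $V_{\min}$ is the minimal weight space of the induced $\mathbb G_m$-action on $V=H^0(\mathcal Y_d,\mathcal O(1))^\vee$. Condition $(\mathfrak C^* )$ means $\mathrm{Stab}_U(z)=\{e\}$ for all $z\in Z_{\min}$. *)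

theory Defs
  imports "HOL-Analysis.Analysis" "HOL-Computational_Algebra.Polynomial"
          "HOL-Library.Poly_Mapping" "HOL-Algebra.Group"
begin

text \<open>The weighted polynomial ring S = k[x_0,...,x_{n-1},y].  The variables are indexed
  by the type 'n option: x_i = Some i (with n = CARD('n)), and y = None.\<close>

type_synonym ('n,'k) wpoly = "('n option \<Rightarrow>\<^sub>0 nat) \<Rightarrow>\<^sub>0 'k"

definition Xv :: "'n option \<Rightarrow> ('n,'k::comm_ring_1) wpoly" where
  "Xv v = Poly_Mapping.single (Poly_Mapping.single v 1) 1"

definition cst :: "'k::comm_ring_1 \<Rightarrow> ('n,'k) wpoly" where
  "cst c = Poly_Mapping.single 0 c"

definition wdeg :: "nat \<Rightarrow> ('n::finite option \<Rightarrow>\<^sub>0 nat) \<Rightarrow> nat" where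
  "wdeg r m = (\<Sum>i\<in>UNIV. Poly_Mapping.lookup m (Some i)) + r * Poly_Mapping.lookup m None"

definition homog :: "nat \<Rightarrow> nat \<Rightarrow> ('n::finite,'k::comm_ring_1) wpoly \<Rightarrow> bool" where
  "homog r e p \<longleftrightarrow> (\<forall>m\<in>Poly_Mapping.keys p. wdeg r m = e)"

definition gr_aut :: "nat \<Rightarrow> (('n::finite,'k::comm_ring_1) wpoly \<Rightarrow> ('n,'k) wpoly) \<Rightarrow> bool" where
  "gr_aut r \<phi> \<longleftrightarrow> bij \<phi>
     \<and> (\<forall>p q. \<phi> (p + q) = \<phi> p + \<phi> q)
     \<and> (\<forall>p q. \<phi> (p * q) = \<phi> p * \<phi> q)
     \<and> (\<forall>c. \<phi> (cst c) = cst c)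
     \<and> (\<forall>e p. homog r e p \<longrightarrow> homog r e (\<phi> p))"

definition AutGr :: "nat \<Rightarrow> ((('n::finite,'k::comm_ring_1) wpoly \<Rightarrow> ('n,'k) wpoly)) monoid" where
  "AutGr r = \<lparr>carrier = {\<phi>. gr_aut r \<phi>}, monoid.mult = (\<circ>), one = id\<rparr>"

definition psubst :: "('n option \<Rightarrow> ('n,'k::comm_ring_1) wpoly) \<Rightarrow> ('n,'k) wpoly \<Rightarrow> ('n,'k) wpoly" where
  "psubst \<sigma> p = (\<Sum>m\<in>Poly_Mapping.keys p. cst (Poly_Mapping.lookup p m) * (\<Prod>v\<in>Poly_Mapping.keys m. \<sigma> v ^ Poly_Mapping.lookup m v))"

definition Hr :: "nat \<Rightarrow> ('n::finite,'k::comm_ring_1) wpoly set" where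
  "Hr r = {h. \<forall>m\<in>Poly_Mapping.keys h. Poly_Mapping.lookup m None = 0 \<and> wdeg r m = r}"

definition xmonos :: "nat \<Rightarrow> ('n::finite option \<Rightarrow>\<^sub>0 nat) set" where
  "xmonos r = {m. Poly_Mapping.lookup m None = 0 \<and> wdeg r m = r}"

definition Phi :: "'k^'n^'n \<Rightarrow> 'k \<Rightarrow> ('n::finite,'k::comm_ring_1) wpoly \<Rightarrow> ('n,'k) wpoly \<Rightarrow> ('n,'k) wpoly" where
  "Phi A c h = psubst (\<lambda>v. case v of
        Some i \<Rightarrow> (\<Sum>j\<in>UNIV. cst (A $ j $ i) * Xv (Some j))
      | None \<Rightarrow> cst c * Xv None + h)"

definition SemiDir :: "nat \<Rightarrow> (('k^'n^'n) \<times> 'k \<times> ('n::finite,'k::field) wpoly) monoid" where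
  "SemiDir r = \<lparr>carrier = {(A,c,h). invertible A \<and> c \<noteq> 0 \<and> h \<in> Hr r},
     monoid.mult = (\<lambda>(A,c,h) (A',c',h'). (matrix_matrix_mult A A', c * c', cst c' * h + Phi A 1 0 h')),
     one = (mat 1, 1, 0)\<rparr>"

definition Urad :: "nat \<Rightarrow> ((('n::finite,'k::field) wpoly \<Rightarrow> ('n,'k) wpoly)) set" where
  "Urad r = {Phi (mat 1) 1 h | h. h \<in> Hr r}"

text \<open>Weight of the monomial x^a y^b in V = H^0(Y_d,O(1))^\<or> for the one-parameter
  subgroup \<lambda>_{g,N}: x_i \<mapsto> t^{-N} x_i, y \<mapsto> t y (convention of the paper,
  under which Z_min = {[y^{d/r}]}): N|a| - b.\<close>
definition wt :: "nat \<Rightarrow> ('n::finite option \<Rightarrow>\<^sub>0 nat) \<Rightarrow> int" where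
  "wt N m = int N * int (\<Sum>i\<in>UNIV. Poly_Mapping.lookup m (Some i)) - int (Poly_Mapping.lookup m None)"

definition minwt :: "nat \<Rightarrow> nat \<Rightarrow> nat \<Rightarrow> 'n::finite itself \<Rightarrow> int" where
  "minwt N r d _ = Min {wt N (m :: 'n option \<Rightarrow>\<^sub>0 nat) | m. wdeg r m = d}"

text \<open>V_min: the minimal weight space inside S_d; Z_min = P(V_min)\<close>
definition Vmin :: "nat \<Rightarrow> nat \<Rightarrow> nat \<Rightarrow> ('n::finite,'k::comm_ring_1) wpoly set" where
  "Vmin N r d = {f. homog r d f \<and> (\<forall>m\<in>Poly_Mapping.keys f. wt N m = minwt N r d TYPE('n))}"

definition StabU :: "nat \<Rightarrow> ('n::finite,'k::field) wpoly \<Rightarrow> (('n,'k) wpoly \<Rightarrow> ('n,'k) wpoly) set" where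
  "StabU r f = {u \<in> Urad r. \<exists>c. c \<noteq> 0 \<and> u f = cst c * f}"

end

theory Submission
  imports Defs "HOL-Library.Multiset"
begin

text \<open>A graded automorphism preserves the degrees 1 and \<open>r\<close>. Since \<open>r > 1\<close>, the degree 1
  part is spanned by the \<open>x\<^sub>i\<close>, so it sends \<open>x\<^sub>i\<close> to a linear form \<open>\<Sum>\<^sub>j A\<^sub>j\<^sub>i x\<^sub>j\<close>
  and \<open>y\<close> to \<open>c y + h\<close> with \<open>h\<close> a form of degree \<open>r\<close> in the \<open>x\<^sub>i\<close>. Reading off the
  coefficients of the \<open>x\<^sub>i\<close> and of \<open>y\<close> in the image shows that surjectivity forces \<open>A\<close> to be
  invertible and \<open>c \<noteq> 0\<close>; composition of such substitutions is the semidirect product law,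
  and the translations \<open>y \<mapsto> y + h\<close> add up, so \<open>U\<close> is abelian.
  On \<open>S\<^sub>d\<close> the weight \<open>N |a| - b\<close> of \<open>x\<^sup>a y\<^sup>b\<close> is uniquely minimised by \<open>y\<^sup>d\<^sup>/\<^sup>r\<close>, and
  \<open>(y + h)\<^sup>k\<close> contains the term \<open>k y\<^sup>k\<^sup>-\<^sup>1 h\<close>, which in characteristic 0 vanishes only
  for \<open>h = 0\<close>; hence \<open>U\<close> acts freely on \<open>Z\<^sub>m\<^sub>i\<^sub>n\<close>.\<close>

abbreviation lookup :: "('a \<Rightarrow>\<^sub>0 'b::zero) \<Rightarrow> 'a \<Rightarrow> 'b" where "lookup \<equiv> Poly_Mapping.lookup"
abbreviation keys :: "('a \<Rightarrow>\<^sub>0 'b::zero) \<Rightarrow> 'a set" where "keys \<equiv> Poly_Mapping.keys"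
abbreviation single :: "'a \<Rightarrow> 'b \<Rightarrow> ('a \<Rightarrow>\<^sub>0 'b::zero)" where "single \<equiv> Poly_Mapping.single"

section \<open>Polynomials and substitution\<close>

lemma poly_mapping_sum_single: "p = (\<Sum>m\<in>keys p. single m (lookup p m))"
  for p :: "'a \<Rightarrow>\<^sub>0 'b::comm_monoid_add"
proof (rule poly_mapping_eqI)
  fix k
  have "lookup (\<Sum>m\<in>keys p. single m (lookup p m)) k = (\<Sum>m\<in>keys p. lookup p m when m = k)"
    by (simp add: lookup_sum lookup_single)
  also have "\<dots> = lookup p k"
    by (cases "k \<in> keys p") (auto simp: when_def in_keys_iff)
  finally show "lookup p k = lookup (\<Sum>m\<in>keys p. single m (lookup p m)) k" by simp
qed

lemma cst_0 [simp]: "cst 0 = 0" by (simp add: cst_def)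
lemma cst_1 [simp]: "cst 1 = 1" by (simp add: cst_def)
lemma cst_add: "cst (a + b) = cst a + cst b" by (simp add: cst_def single_add)
lemma cst_uminus: "cst (- a) = - cst a" by (simp add: cst_def single_uminus)
lemma cst_mult: "cst a * cst b = cst (a * b)" by (simp add: cst_def mult_single)
lemma cst_sum: "cst (sum f A) = (\<Sum>a\<in>A. cst (f a))"
  by (induction A rule: infinite_finite_induct) (simp_all add: cst_add)
lemma of_nat_eq_cst: "(of_nat n :: ('n,'k::comm_ring_1) wpoly) = cst (of_nat n)"
  by (simp add: cst_def)
lemma cst_mult_single: "cst a * single m b = single m (a * b)"
  by (simp add: cst_def mult_single)

lemma lookup_cst_mult: "lookup (cst a * p) m = a * lookup p m"
proof -
  have "cst a * p = Poly_Mapping.map ((*) a) p" by (simp add: cst_def mult_map_scale_conv_mult)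
  then show ?thesis by (simp add: map.rep_eq when_def)
qed

lemma lookup_single_mult: "lookup (single a 1 * p) (a + m) = lookup p m"
  for p :: "('n,'k::comm_ring_1) wpoly"
proof -
  have "single a 1 * p = (\<Sum>m'\<in>keys p. single (a + m') (lookup p m'))"
    by (subst (1) poly_mapping_sum_single[of p]) (simp add: sum_distrib_left mult_single)
  then have "lookup (single a 1 * p) (a + m) = (\<Sum>m'\<in>keys p. if m' = m then lookup p m' else 0)"
    by (simp add: lookup_sum lookup_single when_def)
  also have "\<dots> = lookup p m" by (simp add: in_keys_iff)
  finally show ?thesis .
qed

lemma keys_subset_singleton_iff:
  "keys f \<subseteq> {a} \<and> f \<noteq> 0 \<longleftrightarrow> (\<exists>c. c \<noteq> 0 \<and> f = single a c)"
proof
  assume f: "keys f \<subseteq> {a} \<and> f \<noteq> 0"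
  then have "f = single a (lookup f a)"
    by (intro poly_mapping_eqI) (auto simp: lookup_single when_def in_keys_iff)
  with f show "\<exists>c. c \<noteq> 0 \<and> f = single a c" by (metis single_zero)
qed (auto dest: arg_cong[where f="\<lambda>p. lookup p a"])

lemma single_one_eq_iff [simp]: "single a (Suc 0) = single b (Suc 0) \<longleftrightarrow> a = b"
  by (metis lookup_single_eq lookup_single_not_eq one_neq_zero One_nat_def)

lemma Xv_power: "Xv v ^ k = (single (single v k) 1 :: ('n,'k::comm_ring_1) wpoly)"
  by (induction k) (simp_all add: Xv_def mult_single single_add[symmetric] add.commute)

lemma cst_mult_Xv_power: "cst c * Xv v ^ k = single (single v k) c"
  by (simp add: Xv_power cst_mult_single)

lemma prod_single_one: "(\<Prod>v\<in>S. single (f v) (1::'k::comm_ring_1)) = single (\<Sum>v\<in>S. f v) 1"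
  by (induction S rule: infinite_finite_induct) (simp_all add: mult_single)

definition msubst :: "('v \<Rightarrow> ('v \<Rightarrow>\<^sub>0 nat) \<Rightarrow>\<^sub>0 'k::comm_ring_1) \<Rightarrow> ('v \<Rightarrow>\<^sub>0 nat) \<Rightarrow> ('v \<Rightarrow>\<^sub>0 nat) \<Rightarrow>\<^sub>0 'k" where
  "msubst \<sigma> m = (\<Prod>v\<in>keys m. \<sigma> v ^ lookup m v)"

lemma msubst_superset: "finite S \<Longrightarrow> keys m \<subseteq> S \<Longrightarrow> msubst \<sigma> m = (\<Prod>v\<in>S. \<sigma> v ^ lookup m v)"
  unfolding msubst_def by (rule prod.mono_neutral_left) (auto simp: in_keys_iff)

lemma msubst_0 [simp]: "msubst \<sigma> 0 = 1" by (simp add: msubst_def)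

lemma msubst_single: "msubst \<sigma> (single v k) = \<sigma> v ^ k"
  by (simp add: msubst_def)

lemma msubst_add: "msubst \<sigma> (a + b) = msubst \<sigma> a * msubst \<sigma> b"
proof -
  let ?S = "keys a \<union> keys b"
  have "msubst \<sigma> (a + b) = (\<Prod>v\<in>?S. \<sigma> v ^ lookup (a + b) v)"
    using keys_add[of a b] by (intro msubst_superset) auto
  also have "\<dots> = (\<Prod>v\<in>?S. \<sigma> v ^ lookup a v) * (\<Prod>v\<in>?S. \<sigma> v ^ lookup b v)"
    by (simp add: lookup_add power_add prod.distrib)
  also have "\<dots> = msubst \<sigma> a * msubst \<sigma> b"
    by (simp add: msubst_superset[of ?S a] msubst_superset[of ?S b])
  finally show ?thesis .
qed

lemma msubst_Xv: "msubst Xv m = single m 1"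
proof -
  have "msubst Xv m = (\<Prod>v\<in>keys m. single (single v (lookup m v)) 1)"
    by (simp add: msubst_def Xv_power)
  also have "\<dots> = single m 1"
    by (simp add: prod_single_one poly_mapping_sum_single[of m, symmetric])
  finally show ?thesis .
qed

lemma psubst_eq: "psubst \<sigma> p = (\<Sum>m\<in>keys p. cst (lookup p m) * msubst \<sigma> m)"
  by (simp add: psubst_def msubst_def)

lemma psubst_superset:
  "finite S \<Longrightarrow> keys p \<subseteq> S \<Longrightarrow> psubst \<sigma> p = (\<Sum>m\<in>S. cst (lookup p m) * msubst \<sigma> m)"
  unfolding psubst_eq by (rule sum.mono_neutral_left) (auto simp: in_keys_iff)

lemma psubst_0 [simp]: "psubst \<sigma> 0 = 0" by (simp add: psubst_def)

lemma psubst_single: "psubst \<sigma> (single m c) = cst c * msubst \<sigma> m"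
  by (cases "c = 0") (simp_all add: psubst_eq)

lemma psubst_add: "psubst \<sigma> (p + q) = psubst \<sigma> p + psubst \<sigma> q"
proof -
  let ?S = "keys p \<union> keys q"
  have "psubst \<sigma> (p + q) = (\<Sum>m\<in>?S. cst (lookup (p + q) m) * msubst \<sigma> m)"
    using keys_add[of p q] by (intro psubst_superset) auto
  also have "\<dots> = (\<Sum>m\<in>?S. cst (lookup p m) * msubst \<sigma> m) + (\<Sum>m\<in>?S. cst (lookup q m) * msubst \<sigma> m)"
    by (simp add: lookup_add cst_add distrib_right sum.distrib)
  also have "\<dots> = psubst \<sigma> p + psubst \<sigma> q"
    by (simp add: psubst_superset[of ?S p] psubst_superset[of ?S q])
  finally show ?thesis .
qed

lemma psubst_sum: "psubst \<sigma> (sum f A) = (\<Sum>a\<in>A. psubst \<sigma> (f a))"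
  by (induction A rule: infinite_finite_induct) (simp_all add: psubst_add)

lemma psubst_mult: "psubst \<sigma> (p * q) = psubst \<sigma> p * psubst \<sigma> q"
proof -
  have "p * q = (\<Sum>a\<in>keys p. \<Sum>b\<in>keys q. single (a + b) (lookup p a * lookup q b))"
    by (subst poly_mapping_sum_single[of p], subst poly_mapping_sum_single[of q])
      (simp add: sum_product mult_single)
  then have "psubst \<sigma> (p * q)
      = (\<Sum>a\<in>keys p. \<Sum>b\<in>keys q. cst (lookup p a * lookup q b) * msubst \<sigma> (a + b))"
    by (simp add: psubst_sum psubst_single)
  also have "\<dots> = (\<Sum>a\<in>keys p. \<Sum>b\<in>keys q.
      (cst (lookup p a) * msubst \<sigma> a) * (cst (lookup q b) * msubst \<sigma> b))"
    by (simp add: msubst_add cst_mult[symmetric] mult_ac)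
  also have "\<dots> = psubst \<sigma> p * psubst \<sigma> q"
    by (simp add: psubst_eq sum_product)
  finally show ?thesis .
qed

lemma psubst_cst [simp]: "psubst \<sigma> (cst c) = cst c"
  by (simp add: cst_def psubst_single)

lemma psubst_1 [simp]: "psubst \<sigma> 1 = 1"
  using psubst_cst[of \<sigma> 1] by simp

lemma psubst_power: "psubst \<sigma> (p ^ k) = psubst \<sigma> p ^ k"
  by (induction k) (simp_all add: psubst_mult)

lemma psubst_Xv [simp]: "psubst \<sigma> (Xv v) = \<sigma> v"
  by (simp add: Xv_def psubst_single msubst_single)

lemma psubst_Xv_id [simp]: "psubst Xv p = p"
  by (subst (2) poly_mapping_sum_single[of p]) (simp add: psubst_eq msubst_Xv cst_mult_single)

lemma psubst_cong:
  "(\<And>m v. m \<in> keys p \<Longrightarrow> v \<in> keys m \<Longrightarrow> \<sigma> v = \<tau> v) \<Longrightarrow> psubst \<sigma> p = psubst \<tau> p"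
  unfolding psubst_def by (intro sum.cong refl arg_cong2[where f="(*)"] prod.cong) auto

lemma ring_hom_eq_psubst:
  fixes \<phi> :: "('n,'k::comm_ring_1) wpoly \<Rightarrow> ('n,'k) wpoly"
  assumes add: "\<And>p q. \<phi> (p + q) = \<phi> p + \<phi> q" and mult: "\<And>p q. \<phi> (p * q) = \<phi> p * \<phi> q"
    and cst: "\<And>a. \<phi> (cst a) = cst a"
  shows "\<phi> = psubst (\<phi> \<circ> Xv)"
proof
  fix p
  have \<phi>_sum: "\<phi> (sum f A) = (\<Sum>a\<in>A. \<phi> (f a))" for f :: "_ \<Rightarrow> ('n,'k) wpoly" and A
    by (induction A rule: infinite_finite_induct) (simp_all add: add cst[of 0, simplified])
  have \<phi>_prod: "\<phi> (prod f A) = (\<Prod>a\<in>A. \<phi> (f a))" for f :: "_ \<Rightarrow> ('n,'k) wpoly" and A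
    by (induction A rule: infinite_finite_induct) (simp_all add: mult cst[of 1, simplified])
  have \<phi>_power: "\<phi> (q ^ k) = \<phi> q ^ k" for q k
    by (induction k) (simp_all add: mult cst[of 1, simplified])
  have "\<phi> p = \<phi> (\<Sum>m\<in>keys p. cst (lookup p m) * msubst Xv m)"
    by (subst poly_mapping_sum_single[of p]) (simp add: msubst_Xv cst_mult_single)
  also have "\<dots> = psubst (\<phi> \<circ> Xv) p"
    by (simp add: \<phi>_sum mult cst msubst_def \<phi>_prod \<phi>_power psubst_eq)
  finally show "\<phi> p = psubst (\<phi> \<circ> Xv) p" .
qed

lemma psubst_psubst: "psubst \<sigma> (psubst \<tau> p) = psubst (psubst \<sigma> \<circ> \<tau>) p"
  using ring_hom_eq_psubst[of "psubst \<sigma> \<circ> psubst \<tau>"]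
  by (simp add: psubst_add psubst_mult comp_def fun_eq_iff)

section \<open>Weighted gradings\<close>

definition degw :: "('v::finite \<Rightarrow> nat) \<Rightarrow> ('v \<Rightarrow>\<^sub>0 nat) \<Rightarrow> nat" where
  "degw w m = (\<Sum>v\<in>UNIV. w v * lookup m v)"

definition homw :: "('v::finite \<Rightarrow> nat) \<Rightarrow> nat \<Rightarrow> (('v \<Rightarrow>\<^sub>0 nat) \<Rightarrow>\<^sub>0 'k::zero) \<Rightarrow> bool" where
  "homw w e p \<longleftrightarrow> (\<forall>m\<in>keys p. degw w m = e)"

lemma degw_add: "degw w (a + b) = degw w a + degw w b"
  by (simp add: degw_def lookup_add algebra_simps sum.distrib)

lemma degw_0 [simp]: "degw w 0 = 0" by (simp add: degw_def)

lemma degw_single: "degw w (single v k) = w v * k"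
  by (simp add: degw_def lookup_single when_def if_distrib cong: if_cong)

lemma degw_eq_sum_keys: "degw w m = (\<Sum>v\<in>keys m. w v * lookup m v)"
  unfolding degw_def by (rule sum.mono_neutral_right) (auto simp: in_keys_iff)

lemma homw_0 [simp]: "homw w e 0" by (simp add: homw_def)
lemma homw_1 [simp]: "homw w 0 1" by (simp add: homw_def)
lemma homw_cst [simp]: "homw w 0 (cst c)" by (simp add: cst_def homw_def)
lemma homw_Xv: "homw w (w v) (Xv v)" by (simp add: Xv_def homw_def degw_single)

lemma homw_add: "homw w e p \<Longrightarrow> homw w e q \<Longrightarrow> homw w e (p + q)"
  unfolding homw_def using keys_add[of p q] by blast

lemma homw_sum: "(\<And>a. a \<in> A \<Longrightarrow> homw w e (f a)) \<Longrightarrow> homw w e (sum f A)"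
  by (induction A rule: infinite_finite_induct) (auto intro: homw_add)

lemma homw_mult: "homw w e p \<Longrightarrow> homw w e' q \<Longrightarrow> homw w (e + e') (p * q)"
  unfolding homw_def using keys_mult[of p q] by (force simp: degw_add)

lemma homw_power: "homw w e p \<Longrightarrow> homw w (k * e) (p ^ k)"
  by (induction k) (simp_all add: homw_mult)

lemma homw_prod: "(\<And>a. a \<in> A \<Longrightarrow> homw w (g a) (f a)) \<Longrightarrow> homw w (\<Sum>a\<in>A. g a) (prod f A)"
  by (induction A rule: infinite_finite_induct) (auto intro: homw_mult)

lemma homw_cst_mult: "homw w e p \<Longrightarrow> homw w e (cst c * p)"
  using homw_mult[of w 0 "cst c" e p] by simp

lemma homw_lookup_eq_0: "homw w e p \<Longrightarrow> degw w m \<noteq> e \<Longrightarrow> lookup p m = 0"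
  by (auto simp: homw_def in_keys_iff)

lemma homw_msubst: "(\<And>v. homw w (u v) (\<sigma> v)) \<Longrightarrow> homw w (degw u m) (msubst \<sigma> m)"
  unfolding msubst_def degw_eq_sum_keys by (rule homw_prod) (metis homw_power mult.commute)

lemma homw_psubst: "homw u e p \<Longrightarrow> (\<And>v. homw w (u v) (\<sigma> v)) \<Longrightarrow> homw w e (psubst \<sigma> p)"
  unfolding psubst_eq by (rule homw_sum) (metis homw_def homw_cst_mult homw_msubst)

definition std_weight :: "nat \<Rightarrow> 'n option \<Rightarrow> nat" where
  "std_weight r v = (case v of Some _ \<Rightarrow> 1 | None \<Rightarrow> r)"

definition y_weight :: "'n option \<Rightarrow> nat" where
  "y_weight v = (case v of Some _ \<Rightarrow> 0 | None \<Rightarrow> 1)"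

lemma sum_UNIV_option:
  "(\<Sum>v\<in>UNIV. f v) = f None + (\<Sum>i\<in>UNIV. f (Some i))" for f :: "'n::finite option \<Rightarrow> 'a::comm_monoid_add"
  by (simp add: UNIV_option_conv sum.reindex)

lemma degw_std_weight:
  "degw (std_weight r) (m :: 'n::finite option \<Rightarrow>\<^sub>0 nat) = r * lookup m None + (\<Sum>i\<in>UNIV. lookup m (Some i))"
  by (simp add: degw_def sum_UNIV_option std_weight_def)

lemma wdeg_eq_degw: "wdeg r m = degw (std_weight r) m"
  by (simp add: wdeg_def degw_std_weight)

lemma homog_iff_homw: "homog r e p \<longleftrightarrow> homw (std_weight r) e p"
  by (simp add: homog_def homw_def wdeg_eq_degw)

lemma degw_y_weight: "degw y_weight (m :: 'n::finite option \<Rightarrow>\<^sub>0 nat) = lookup m None"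
  by (simp add: degw_def sum_UNIV_option y_weight_def)

lemma Hr_iff: "h \<in> Hr r \<longleftrightarrow> homw (std_weight r) r h \<and> homw y_weight 0 h"
  by (auto simp: Hr_def homw_def wdeg_eq_degw degw_y_weight)

lemma Hr_0 [simp]: "0 \<in> Hr r" by (simp add: Hr_def)

lemma Hr_cst_mult: "h \<in> Hr r \<Longrightarrow> cst a * h \<in> Hr r"
  by (simp add: Hr_iff homw_cst_mult)

section \<open>The automorphisms \<open>Phi A c h\<close>\<close>

definition lin_form :: "('n::finite \<Rightarrow> 'k) \<Rightarrow> ('n,'k::comm_ring_1) wpoly" where
  "lin_form a = (\<Sum>j\<in>UNIV. cst (a j) * Xv (Some j))"

definition Phi_vars :: "'k^'n^'n \<Rightarrow> 'k \<Rightarrow> ('n::finite,'k::comm_ring_1) wpoly \<Rightarrow> 'n option \<Rightarrow> ('n,'k) wpoly" where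
  "Phi_vars A c h v = (case v of Some i \<Rightarrow> lin_form (\<lambda>j. A $ j $ i) | None \<Rightarrow> cst c * Xv None + h)"

lemma Phi_vars_Some [simp]: "Phi_vars A c h (Some i) = lin_form (\<lambda>j. A $ j $ i)"
  by (simp add: Phi_vars_def)

lemma Phi_vars_None [simp]: "Phi_vars A c h None = cst c * Xv None + h"
  by (simp add: Phi_vars_def)

lemma Phi_eq_psubst: "Phi A c h = psubst (Phi_vars A c h)"
  by (simp add: Phi_def Phi_vars_def[abs_def] lin_form_def)

lemma lookup_lin_form: "lookup (lin_form a) (single (Some k) 1) = a k"
proof -
  have "lookup (lin_form a) (single (Some k) 1) = (\<Sum>j\<in>UNIV. if j = k then a j else 0)"
    by (simp add: lin_form_def Xv_def cst_mult_single lookup_sum lookup_single when_def)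
  then show ?thesis by simp
qed

lemma homw_lin_form: "(\<And>j. w (Some j) = e) \<Longrightarrow> homw w e (lin_form a)"
  unfolding lin_form_def by (rule homw_sum) (metis homw_Xv homw_cst_mult)

lemma homw_std_weight_Phi_vars:
  assumes "h \<in> Hr r"
  shows "homw (std_weight r) (std_weight r v) (Phi_vars A c h v)"
proof (cases v)
  case None
  have "homw (std_weight r) r (cst c * Xv None)"
    using homw_Xv[of "std_weight r" None] by (intro homw_cst_mult) (simp add: std_weight_def)
  moreover have "homw (std_weight r) r h" using assms by (simp add: Hr_iff)
  ultimately show ?thesis using homw_add by (simp add: None std_weight_def)
qed (simp add: std_weight_def homw_lin_form)

lemma homw_y_weight_Phi_vars: "homw y_weight (y_weight v) (Phi_vars A c 0 v)"
proof (cases v)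
  case None
  then show ?thesis
    using homw_cst_mult[OF homw_Xv[of y_weight None]] by (simp add: y_weight_def)
qed (simp add: y_weight_def homw_lin_form)

lemma homw_y_weight_Phi_vars_0: "h \<in> Hr r \<Longrightarrow> homw y_weight 0 (Phi_vars A 0 h v)"
  by (cases v) (simp_all add: Hr_iff y_weight_def homw_lin_form)

lemma homw_Phi:
  "homw (std_weight r) e p \<Longrightarrow> h \<in> Hr r \<Longrightarrow> homw (std_weight r) e (Phi A c h p)"
  unfolding Phi_eq_psubst by (blast intro: homw_psubst homw_std_weight_Phi_vars)

lemma Phi_Hr: "h \<in> Hr r \<Longrightarrow> Phi A c h' h = Phi A 1 0 h"
  unfolding Phi_eq_psubst
proof (rule psubst_cong)
  fix m v assume "h \<in> Hr r" "m \<in> keys h" "v \<in> keys m"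
  then have "lookup m None = 0" by (simp add: Hr_def)
  with \<open>v \<in> keys m\<close> have "v \<noteq> None" by (metis in_keys_iff)
  then show "Phi_vars A c h' v = Phi_vars A 1 0 v" by (cases v) auto
qed

lemma Phi_in_Hr: "h \<in> Hr r \<Longrightarrow> Phi A 1 0 h \<in> Hr r"
  unfolding Hr_iff Phi_eq_psubst
  by (metis homw_psubst homw_std_weight_Phi_vars homw_y_weight_Phi_vars Hr_0)

lemma Phi_0 [simp]: "Phi A c h 0 = 0" by (simp add: Phi_eq_psubst)

lemma Phi_cst_mult: "Phi A c h (cst a * q) = cst a * Phi A c h q"
  by (simp add: Phi_eq_psubst psubst_mult)

lemma Phi_one: "Phi (mat 1) 1 0 = (id :: ('n::finite,'k::comm_ring_1) wpoly \<Rightarrow> _)"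
proof -
  have "Phi_vars (mat 1) 1 0 v = Xv v" for v :: "'n::finite option"
  proof (cases v)
    case (Some i)
    have "lin_form (\<lambda>j. mat 1 $ j $ i) = (\<Sum>j\<in>UNIV. if j = i then Xv (Some i) else 0)"
      unfolding lin_form_def by (rule sum.cong) (auto simp: mat_def)
    then show ?thesis by (simp add: Some)
  qed simp
  then have vars: "Phi_vars (mat 1) 1 0 = (Xv :: _ \<Rightarrow> ('n,'k) wpoly)" ..
  show ?thesis by (simp add: Phi_eq_psubst vars fun_eq_iff)
qed

lemma Phi_comp:
  assumes "h' \<in> Hr r"
  shows "Phi A c h \<circ> Phi A' c' h' = Phi (A ** A') (c * c') (cst c' * h + Phi A 1 0 h')"
proof -
  have "psubst (Phi_vars A c h) (Phi_vars A' c' h' v) = Phi_vars (A ** A') (c * c') (cst c' * h + Phi A 1 0 h') v" for v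
  proof (cases v)
    case None
    have "psubst (Phi_vars A c h) h' = Phi A 1 0 h'"
      using Phi_Hr[OF assms, of A c h] by (simp add: Phi_eq_psubst)
    then show ?thesis
      by (simp add: None psubst_add psubst_mult algebra_simps cst_mult[symmetric])
  next
    case (Some i)
    have "psubst (Phi_vars A c h) (Phi_vars A' c' h' v)
        = (\<Sum>j\<in>UNIV. \<Sum>k\<in>UNIV. cst (A $ k $ j * A' $ j $ i) * Xv (Some k))"
      by (simp add: Some lin_form_def psubst_sum psubst_mult sum_distrib_left cst_mult[symmetric] mult_ac)
    also have "\<dots> = (\<Sum>k\<in>UNIV. \<Sum>j\<in>UNIV. cst (A $ k $ j * A' $ j $ i) * Xv (Some k))"
      by (rule sum.swap)
    also have "\<dots> = Phi_vars (A ** A') (c * c') (cst c' * h + Phi A 1 0 h') v"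
      by (simp add: Some lin_form_def matrix_matrix_mult_def cst_sum sum_distrib_right)
    finally show ?thesis .
  qed
  then have vars: "psubst (Phi_vars A c h) \<circ> Phi_vars A' c' h'
      = Phi_vars (A ** A') (c * c') (cst c' * h + Phi A 1 0 h')"
    by (simp add: fun_eq_iff)
  show ?thesis
    unfolding Phi_eq_psubst[of A c h] Phi_eq_psubst[of A' c' h'] Phi_eq_psubst[of "A ** A'"]
    by (rule ext) (simp add: psubst_psubst vars)
qed

lemma gr_aut_Phi:
  fixes A :: "'k::field^'n::finite^'n" and h :: "('n,'k) wpoly"
  assumes A: "invertible A" and c: "c \<noteq> 0" and h: "h \<in> Hr r"
  shows "gr_aut r (Phi A c h)"
proof -
  obtain B where AB: "A ** B = mat 1" and BA: "B ** A = mat 1"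
    using A invertible_def by blast
  define h' where "h' = cst (- inverse c) * Phi B 1 0 h"
  have h': "h' \<in> Hr r" using h by (simp add: h'_def Hr_cst_mult Phi_in_Hr)
  have "Phi A 1 0 (Phi B 1 0 q) = q" for q
    using fun_cong[OF Phi_comp[OF Hr_0, of A 1 0 B 1], of q] AB by (simp add: Phi_one)
  then have "cst (inverse c) * h + Phi A 1 0 h' = 0"
    by (simp add: h'_def Phi_cst_mult flip: distrib_right cst_add)
  then have right: "Phi A c h \<circ> Phi B (inverse c) h' = id"
    using Phi_comp[OF h', of A c h B "inverse c"] AB c by (simp add: Phi_one)
  have "cst c * h' = - Phi B 1 0 h"
    using c by (simp add: h'_def mult.assoc[symmetric] cst_mult cst_uminus)
  then have "cst c * h' + Phi B 1 0 h = 0" by simp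
  then have left: "Phi B (inverse c) h' \<circ> Phi A c h = id"
    using Phi_comp[OF h, of B "inverse c" h' A c] BA c by (simp add: Phi_one)
  have "bij (Phi A c h)" using o_bij[OF left right] .
  then show ?thesis
    unfolding gr_aut_def homog_iff_homw using h
    by (simp add: Phi_eq_psubst psubst_add psubst_mult homw_Phi[unfolded Phi_eq_psubst])
qed

lemma Phi_inj:
  fixes h :: "('n::finite,'k::field) wpoly"
  assumes "h \<in> Hr r" "h' \<in> Hr r" "Phi A c h = Phi A' c' h'"
  shows "A = A' \<and> c = c' \<and> h = h'"
proof -
  have vars: "Phi_vars A c h v = Phi_vars A' c' h' v" for v
    using fun_cong[OF assms(3), of "Xv v"] by (simp add: Phi_eq_psubst)
  have "A $ j $ i = A' $ j $ i" for i j
    using arg_cong[OF vars[of "Some i"], of "\<lambda>q. lookup q (single (Some j) 1)"]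
    by (simp only: Phi_vars_Some lookup_lin_form)
  then have "A = A'" by (simp add: vec_eq_iff)
  have y_coeff: "lookup g (single None 1) = 0" if "g \<in> Hr r" for g :: "('n,'k) wpoly"
  proof -
    have "single None 1 \<notin> keys g" using that by (auto simp: Hr_def)
    then show ?thesis by (simp add: in_keys_iff)
  qed
  have "c = c'"
    using arg_cong[OF vars[of None], of "\<lambda>q. lookup q (single None 1)"] y_coeff assms(1,2)
    by (simp add: lookup_add Xv_def cst_mult_single)
  with vars[of None] \<open>A = A'\<close> show ?thesis by simp
qed

section \<open>Graded automorphisms\<close>

lemma degw_std_weight_eq_1:
  assumes "r > 1" and "degw (std_weight r) m = 1"
  shows "\<exists>j. m = single (Some j) 1"
proof -
  have "lookup m None = 0"
    using assms by (cases "lookup m None") (simp_all add: degw_std_weight)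
  with assms have "(\<Sum>i\<in>UNIV. lookup m (Some i)) = Suc 0"
    by (simp add: degw_std_weight)
  then obtain j where j: "lookup m (Some j) = 1" "\<And>i. i \<noteq> j \<Longrightarrow> lookup m (Some i) = 0"
    by (auto simp: sum_eq_Suc0_iff)
  have "m = single (Some j) 1"
  proof (rule poly_mapping_eqI)
    fix v show "lookup m v = lookup (single (Some j) 1) v"
      using j \<open>lookup m None = 0\<close> by (cases v) (auto simp: lookup_single when_def)
  qed
  then show ?thesis ..
qed

lemma degw_std_weight_eq_r:
  assumes "r > 0" and "degw (std_weight r) m = r" and "m \<noteq> single None 1"
  shows "lookup m None = 0"
proof (rule ccontr)
  assume "lookup m None \<noteq> 0"
  have "r * lookup m None \<le> r * 1"
    using assms(2) degw_std_weight[of r m] by linarith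
  then have "lookup m None \<le> 1"
    using assms(1) by simp
  with \<open>lookup m None \<noteq> 0\<close> have "lookup m None = 1" by simp
  with assms(2) have "lookup m (Some i) = 0" for i
    by (simp add: degw_std_weight)
  have "m = single None 1"
  proof (rule poly_mapping_eqI)
    fix v show "lookup m v = lookup (single None 1) v"
      using \<open>lookup m None = 1\<close> \<open>\<And>i. lookup m (Some i) = 0\<close> by (cases v) (simp_all add: lookup_single)
  qed
  with assms(3) show False ..
qed

lemma homw_1_eq_lin_form:
  fixes q :: "('n::finite,'k::comm_ring_1) wpoly"
  assumes "r > 1" and "homw (std_weight r) 1 q"
  shows "q = lin_form (\<lambda>j. lookup q (single (Some j) 1))"
proof (rule poly_mapping_eqI)
  fix m
  have lin: "lookup (lin_form (\<lambda>j. lookup q (single (Some j) 1))) m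
      = (\<Sum>j\<in>UNIV. if single (Some j) 1 = m then lookup q m else 0)"
    by (auto simp: lin_form_def Xv_def cst_mult_single lookup_sum lookup_single when_def intro: sum.cong)
  show "lookup q m = lookup (lin_form (\<lambda>j. lookup q (single (Some j) 1))) m"
  proof (cases "\<exists>j. m = single (Some j) 1")
    case True
    then obtain i where "m = single (Some i) 1" by blast
    then show ?thesis by (simp add: lin_form_def Xv_def cst_mult_single lookup_sum lookup_single when_def)
  next
    case False
    then have "lookup q m = 0"
      using assms degw_std_weight_eq_1 by (metis homw_lookup_eq_0)
    with False show ?thesis unfolding lin by (auto intro: sum.neutral)
  qed
qed

lemma gr_aut_eq_Phi:
  fixes \<phi> :: "('n::finite,'k::field) wpoly \<Rightarrow> ('n,'k) wpoly"
  assumes "r > 1" and "gr_aut r \<phi>"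
  shows "\<exists>A c h. h \<in> Hr r \<and> \<phi> = Phi A c h"
proof -
  have \<phi>_eq: "\<phi> = psubst (\<phi> \<circ> Xv)"
    using assms(2) unfolding gr_aut_def by (intro ring_hom_eq_psubst) blast+
  have graded: "\<And>e p. homw (std_weight r) e p \<Longrightarrow> homw (std_weight r) e (\<phi> p)"
    using assms(2) by (simp add: gr_aut_def homog_iff_homw)
  have hom: "homw (std_weight r) (std_weight r v) (\<phi> (Xv v))" for v
    by (rule graded[OF homw_Xv])
  define A :: "'k^'n^'n" where "A = (\<chi> j i. lookup (\<phi> (Xv (Some i))) (single (Some j) 1))"
  define c where "c = lookup (\<phi> (Xv None)) (single None 1)"
  define h where "h = \<phi> (Xv None) - cst c * Xv None"
  have "Phi_vars A c h v = (\<phi> \<circ> Xv) v" for v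
  proof (cases v)
    case (Some i)
    show ?thesis
      using homw_1_eq_lin_form[OF assms(1), of "\<phi> (Xv (Some i))"] hom[of "Some i"]
      by (simp add: Some A_def std_weight_def)
  qed (simp add: h_def)
  then have "\<phi> = Phi A c h"
    unfolding Phi_eq_psubst by (subst \<phi>_eq) (rule arg_cong[where f=psubst], rule ext, simp)
  moreover have "h \<in> Hr r"
    unfolding Hr_def
  proof safe
    fix m assume m: "m \<in> keys h"
    then have "m \<noteq> single None 1"
      by (auto simp: h_def c_def Xv_def cst_mult_single lookup_minus in_keys_iff)
    moreover have "m \<in> keys (\<phi> (Xv None))"
      using m \<open>m \<noteq> single None 1\<close>
      by (auto simp: h_def Xv_def cst_mult_single lookup_minus lookup_single in_keys_iff)
    then have "degw (std_weight r) m = r"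
      using hom[of None] by (simp add: homw_def std_weight_def)
    ultimately show "lookup m None = 0"
      using assms(1) by (intro degw_std_weight_eq_r) simp_all
    show "wdeg r m = r" using \<open>degw (std_weight r) m = r\<close> by (simp add: wdeg_eq_degw)
  qed
  ultimately show ?thesis by blast
qed

definition lin_coeffs :: "('n::finite,'k::comm_ring_1) wpoly \<Rightarrow> 'k^'n" where
  "lin_coeffs q = (\<chi> j. lookup q (single (Some j) 1))"

lemma lin_coeffs_sum: "lin_coeffs (sum f S) = (\<Sum>a\<in>S. lin_coeffs (f a))"
  by (induction S rule: infinite_finite_induct)
    (simp_all add: lin_coeffs_def vec_eq_iff lookup_add)

lemma lin_coeffs_lin_form: "lin_coeffs (lin_form a) = (\<chi> j. a j)"
  by (simp only: lin_coeffs_def lookup_lin_form)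

lemma lin_coeffs_single:
  "lin_coeffs (single (single (Some i) 1) a :: ('n::finite,'k::comm_ring_1) wpoly) = (\<chi> j. if j = i then a else 0)"
  by (auto simp: lin_coeffs_def vec_eq_iff lookup_single when_def)

lemma degw_std_weight_x: "degw (std_weight r) (single (Some j) 1) = 1"
  by (simp add: degw_single std_weight_def)

lemma lin_coeffs_Phi_single:
  fixes h :: "('n::finite,'k::comm_ring_1) wpoly"
  assumes "r > 1" and "h \<in> Hr r"
  shows "lin_coeffs (Phi A c h (single m a)) = A *v lin_coeffs (single m a)"
proof (cases "degw (std_weight r) m = 1")
  case True
  then obtain i where m: "m = single (Some i) 1" using assms(1) degw_std_weight_eq_1 by blast
  have "lin_coeffs (Phi A c h (single m a)) = (\<chi> k. A $ k $ i * a)"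
    by (simp add: m Phi_eq_psubst psubst_single msubst_single lin_coeffs_def lookup_cst_mult
        lookup_lin_form[simplified] mult.commute)
  also have "\<dots> = A *v lin_coeffs (single m a)"
    unfolding m lin_coeffs_single
    by (simp add: matrix_vector_mult_def vec_eq_iff mult.commute[of _ a]
        if_distrib[of "(*) _"] cong: if_cong)
  finally show ?thesis .
next
  case False
  have hom: "homw (std_weight r) (degw (std_weight r) m) (Phi A c h (single m a))"
    using assms(2) by (intro homw_Phi) (simp add: homw_def)
  have "lookup (Phi A c h (single m a)) (single (Some j) 1) = 0" for j
    using homw_lookup_eq_0[OF hom, of "single (Some j) 1"] False degw_std_weight_x by metis
  then have "lin_coeffs (Phi A c h (single m a)) = 0"
    by (simp add: lin_coeffs_def vec_eq_iff)
  moreover have "lin_coeffs (single m a) = 0"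
    using False degw_std_weight_x by (auto simp: lin_coeffs_def vec_eq_iff lookup_single when_def)
  ultimately show ?thesis by simp
qed

lemma lin_coeffs_Phi:
  fixes h :: "('n::finite,'k::field) wpoly"
  assumes "r > 1" and "h \<in> Hr r"
  shows "lin_coeffs (Phi A c h p) = A *v lin_coeffs p"
proof -
  have Phi_sum: "Phi A c h p = (\<Sum>m\<in>keys p. Phi A c h (single m (lookup p m)))"
    unfolding Phi_eq_psubst by (subst psubst_eq) (simp add: psubst_single)
  show ?thesis
    by (subst (2) poly_mapping_sum_single[of p])
      (simp add: Phi_sum lin_coeffs_sum lin_coeffs_Phi_single[OF assms] vec.sum)
qed

lemma invertible_if_surj_Phi:
  fixes h :: "('n::finite,'k::field) wpoly"
  assumes "r > 1" and "h \<in> Hr r" and "surj (Phi A c h)"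
  shows "invertible A"
proof -
  have "b \<in> range ((*v) A)" for b
  proof -
    obtain p where "Phi A c h p = lin_form (\<lambda>j. b $ j)" using assms(3) surjD by metis
    then have "A *v lin_coeffs p = b"
      using lin_coeffs_Phi[OF assms(1,2), of A c p] by (simp add: lin_coeffs_lin_form)
    then show ?thesis by blast
  qed
  then show ?thesis
    by (auto simp: invertible_right_inverse matrix_right_invertible_surjective)
qed

text \<open>For \<open>c = 0\<close> the image of \<open>Phi A c h\<close> contains no polynomial involving \<open>y\<close>.\<close>

lemma nonzero_if_surj_Phi:
  fixes h :: "('n::finite,'k::comm_ring_1) wpoly"
  assumes "h \<in> Hr r" and "surj (Phi A c h)"
  shows "c \<noteq> 0"
proof
  assume "c = 0"
  obtain p where p: "Phi A c h p = Xv None" using assms(2) surjD by metis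
  have "homw y_weight 0 (Phi A 0 h p)"
    unfolding Phi_eq_psubst
    by (rule homw_psubst[where u="\<lambda>_. 0"])
      (simp add: homw_def degw_def, simp add: homw_y_weight_Phi_vars_0[OF assms(1)])
  with p \<open>c = 0\<close> show False by (simp add: homw_def Xv_def degw_y_weight)
qed

lemma carrier_AutGr:
  assumes "r > 1"
  shows "carrier (AutGr r :: (('n::finite,'k::field) wpoly \<Rightarrow> _) monoid)
    = (\<lambda>(A,c,h). Phi A c h) ` carrier (SemiDir r)"
proof (intro equalityI subsetI)
  fix \<phi> assume "\<phi> \<in> carrier (AutGr r :: (('n,'k) wpoly \<Rightarrow> _) monoid)"
  then have "gr_aut r \<phi>" by (simp add: AutGr_def)
  then obtain A c h where "h \<in> Hr r" "\<phi> = Phi A c h"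
    using gr_aut_eq_Phi[OF assms] by blast
  moreover have "surj (Phi A c h)"
    using \<open>gr_aut r \<phi>\<close> \<open>\<phi> = Phi A c h\<close> by (simp add: gr_aut_def bij_def)
  ultimately have "invertible A" "c \<noteq> 0"
    using invertible_if_surj_Phi[OF assms] nonzero_if_surj_Phi by blast+
  with \<open>h \<in> Hr r\<close> \<open>\<phi> = Phi A c h\<close> show "\<phi> \<in> (\<lambda>(A,c,h). Phi A c h) ` carrier (SemiDir r)"
    by (force simp: SemiDir_def)
qed (auto simp: SemiDir_def AutGr_def gr_aut_Phi)

lemma Phi_iso:
  assumes "r > 1"
  shows "(\<lambda>(A,c,h). Phi A c h) \<in> iso (SemiDir r) (AutGr r :: (('n::finite,'k::field) wpoly \<Rightarrow> _) monoid)"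
proof -
  have "(\<lambda>(A,c,h). Phi A c h) \<in> hom (SemiDir r) (AutGr r :: (('n,'k) wpoly \<Rightarrow> _) monoid)"
    by (auto simp: hom_def SemiDir_def AutGr_def gr_aut_Phi Phi_comp)
  moreover have "inj_on (\<lambda>(A,c,h). Phi A c h) (carrier (SemiDir r :: (_ \<times> _ \<times> ('n,'k) wpoly) monoid))"
    by (auto simp: inj_on_def SemiDir_def dest: Phi_inj)
  ultimately show ?thesis
    by (simp add: iso_def bij_betw_def carrier_AutGr[OF assms])
qed

section \<open>The unipotent radical\<close>

lemma Phi_unipotent_comp:
  assumes "h' \<in> Hr r"
  shows "Phi (mat 1) 1 h \<circ> Phi (mat 1) 1 h' = Phi (mat 1) 1 (h + h' :: ('n::finite,'k::comm_ring_1) wpoly)"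
  using Phi_comp[OF assms, of "mat 1" 1 h "mat 1" 1] by (simp add: Phi_one)

lemma Urad_comm:
  fixes u v :: "('n::finite,'k::field) wpoly \<Rightarrow> _"
  assumes "u \<in> Urad r" and "v \<in> Urad r"
  shows "u \<circ> v = v \<circ> u"
proof -
  obtain h h' where "h \<in> Hr r" "u = Phi (mat 1) 1 h" "h' \<in> Hr r" "v = Phi (mat 1) 1 h'"
    using assms by (auto simp: Urad_def)
  then show ?thesis by (simp add: Phi_unipotent_comp add.commute)
qed

text \<open>Monomials of degree \<open>r\<close> in the \<open>x\<^sub>i\<close> are multisets of size \<open>r\<close> of variables.\<close>

lemma card_xmonos: "card (xmonos r :: ('n::finite option \<Rightarrow>\<^sub>0 nat) set) = (CARD('n) - 1 + r) choose r"
proof -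
  define to_mset :: "('n option \<Rightarrow>\<^sub>0 nat) \<Rightarrow> 'n multiset" where
    "to_mset m = Abs_multiset (\<lambda>i. lookup m (Some i))" for m
  define of_mset :: "'n multiset \<Rightarrow> ('n option \<Rightarrow>\<^sub>0 nat)" where
    "of_mset M = Abs_poly_mapping (case_option 0 (count M))" for M
  have count_to_mset: "count (to_mset m) i = lookup m (Some i)" for m i
    by (simp add: to_mset_def)
  have lookup_of_mset: "lookup (of_mset M) = case_option 0 (count M)" for M
    by (simp add: of_mset_def)
  have size_eq: "size M = (\<Sum>i\<in>UNIV. count M i)" for M :: "'n multiset"
    by (simp add: size_multiset_overloaded_eq) (rule sum.mono_neutral_left, auto simp: not_in_iff)
  have xmonos_iff: "m \<in> xmonos r \<longleftrightarrow> lookup m None = 0 \<and> (\<Sum>i\<in>UNIV. lookup m (Some i)) = r" for m r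
    by (auto simp: xmonos_def wdeg_def)
  have "bij_betw to_mset (xmonos r) (multisets_of_size UNIV r)"
  proof (rule bij_betw_byWitness[where f'=of_mset])
    show "\<forall>m\<in>xmonos r. of_mset (to_mset m) = m"
      by (auto simp: xmonos_iff lookup_of_mset count_to_mset intro!: poly_mapping_eqI split: option.split)
    show "\<forall>M\<in>multisets_of_size UNIV r. to_mset (of_mset M) = M"
      by (auto simp: lookup_of_mset count_to_mset intro!: multiset_eqI)
    show "to_mset ` xmonos r \<subseteq> multisets_of_size UNIV r"
      by (auto simp: multisets_of_size_def size_eq count_to_mset xmonos_iff)
    show "of_mset ` multisets_of_size UNIV r \<subseteq> xmonos r"
      by (auto simp: multisets_of_size_def size_eq lookup_of_mset xmonos_iff)
  qed
  then have "card (xmonos r :: ('n option \<Rightarrow>\<^sub>0 nat) set) = card (multisets_of_size (UNIV :: 'n set) r)"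
    by (rule bij_betw_same_card)
  also have "\<dots> = (CARD('n) - 1 + r) choose r"
    using card_multisets_of_size[of "UNIV :: 'n set" r] by (simp add: Suc_leI add.commute)
  finally show ?thesis .
qed

section \<open>The minimal weight space and its stabilizers\<close>

lemma wt_bounds:
  fixes m :: "'n::finite option \<Rightarrow>\<^sub>0 nat"
  assumes "r > 0" and "wdeg r m = r * k"
  shows "- int k \<le> wt N m" and "wt N m \<le> int (N * (r * k))"
proof -
  define a where "a = (\<Sum>i\<in>UNIV. lookup m (Some i))"
  have "a + r * lookup m None = r * k" using assms(2) by (simp add: wdeg_def a_def)
  then have "r * lookup m None \<le> r * k" and "a \<le> r * k" by linarith+
  then have "lookup m None \<le> k" and "a \<le> r * k" using assms(1) by simp_all
  have wt: "wt N m = int N * int a - int (lookup m None)" by (simp add: wt_def a_def)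
  have "0 \<le> int N * int a" by simp
  with \<open>lookup m None \<le> k\<close> show "- int k \<le> wt N m" unfolding wt by linarith
  have "int a \<le> int (r * k)" using \<open>a \<le> r * k\<close> by (simp only: of_nat_le_iff)
  then have "int N * int a \<le> int N * int (r * k)" by (rule mult_left_mono) simp
  then show "wt N m \<le> int (N * (r * k))" unfolding wt by simp
qed

lemma wt_eq_min_iff:
  fixes m :: "'n::finite option \<Rightarrow>\<^sub>0 nat"
  assumes "r > 0" and "N > 0" and "wdeg r m = r * k"
  shows "wt N m = - int k \<longleftrightarrow> m = single None k"
proof
  assume wt: "wt N m = - int k"
  define a where "a = (\<Sum>i\<in>UNIV. lookup m (Some i))"
  have deg: "a + r * lookup m None = r * k" using assms(3) by (simp add: wdeg_def a_def)
  then have "r * lookup m None \<le> r * k" by linarith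
  then have "lookup m None \<le> k" using assms(1) by simp
  moreover have "int (N * a) = int (lookup m None) - int k" using wt by (simp add: wt_def a_def)
  ultimately have "N * a = 0" by linarith
  then have "a = 0" using assms(2) by simp
  with deg assms(1) have "lookup m None = k" by simp
  moreover have "lookup m (Some i) = 0" for i using \<open>a = 0\<close> by (simp add: a_def)
  ultimately show "m = single None k"
  proof (intro poly_mapping_eqI)
    fix v show "lookup m v = lookup (single None k) v"
      using \<open>lookup m None = k\<close> \<open>\<And>i. lookup m (Some i) = 0\<close> by (cases v) (simp_all add: lookup_single)
  qed
qed (simp add: wt_def lookup_single)

lemma minwt_eq:
  assumes "r > 0"
  shows "minwt N r (r * k) TYPE('n::finite) = - int k"
  unfolding minwt_def
proof (rule Min_eqI)
  let ?W = "{wt N (m :: 'n option \<Rightarrow>\<^sub>0 nat) | m. wdeg r m = r * k}"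
  have "?W \<subseteq> {- int k .. int (N * (r * k))}"
    using wt_bounds[OF assms] by fastforce
  then show "finite ?W" by (rule finite_subset) simp
  show "- int k \<le> w" if "w \<in> ?W" for w
    using that wt_bounds[OF assms] by fastforce
  have "wdeg r (single (None :: 'n option) k) = r * k"
    by (simp add: wdeg_def lookup_single)
  then show "- int k \<in> ?W"
    by (force simp: wt_def lookup_single)
qed

lemma Vmin_eq:
  fixes N r d :: nat
  assumes "r > 0" and "N > 0" and "r dvd d"
  shows "{f \<in> (Vmin N r d :: ('n::finite,'k::field) wpoly set). f \<noteq> 0} = {cst c * Xv None ^ (d div r) | c. c \<noteq> 0}"
proof -
  define k where "k = d div r"
  have d: "d = r * k" using assms(3) by (simp add: k_def)
  have "wdeg r m = r * k \<and> wt N m = - int k \<longleftrightarrow> m = single None k" for m :: "'n option \<Rightarrow>\<^sub>0 nat"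
    using wt_eq_min_iff[OF assms(1,2), of m k] by (auto simp: wdeg_def lookup_single)
  then have "f \<in> Vmin N r d \<longleftrightarrow> keys f \<subseteq> {single None k}" for f :: "('n,'k) wpoly"
    unfolding Vmin_def homog_def d minwt_eq[OF assms(1)] by blast
  then show ?thesis
    by (auto simp: k_def[symmetric] cst_mult_Xv_power keys_subset_singleton_iff)
qed

text \<open>In the binomial expansion only the term \<open>(k + 1) y\<^sup>k h\<close> has \<open>y\<close>-degree \<open>k\<close>.\<close>

lemma lookup_y_plus_power:
  fixes h :: "('n::finite,'k::comm_ring_1) wpoly"
  assumes "homw y_weight 0 h" and "lookup m None = 0"
  shows "lookup ((Xv None + h) ^ Suc k) (single None k + m) = of_nat (Suc k) * lookup h m"
proof -
  define M where "M = single None k + m"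
  define T where "T j = cst (of_nat (Suc k choose j)) * (Xv None ^ j * h ^ (Suc k - j))" for j
  have T_hom: "homw y_weight j (T j)" for j
  proof -
    have "homw y_weight (j * 1 + (Suc k - j) * 0) (Xv None ^ j * h ^ (Suc k - j))"
      using homw_Xv[of y_weight None] assms(1)
      by (intro homw_mult homw_power) (simp_all add: y_weight_def)
    then show ?thesis unfolding T_def by (intro homw_cst_mult) simp
  qed
  have "degw y_weight M = k" using assms(2) by (simp add: M_def degw_y_weight lookup_add)
  then have T_other: "lookup (T j) M = 0" if "j \<in> {..Suc k} - {k}" for j
    using that by (intro homw_lookup_eq_0[OF T_hom]) auto
  have "(Xv None + h) ^ Suc k = (\<Sum>j\<le>Suc k. T j)"
    unfolding binomial_ring T_def by (simp add: of_nat_eq_cst mult_ac)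
  then have "lookup ((Xv None + h) ^ Suc k) M = (\<Sum>j\<le>Suc k. lookup (T j) M)"
    by (simp only: lookup_sum)
  also have "\<dots> = lookup (T k) M + (\<Sum>j\<in>{..Suc k} - {k}. lookup (T j) M)"
    by (rule sum.remove) auto
  also have "\<dots> = lookup (T k) M"
    using T_other by simp
  also have "\<dots> = of_nat (Suc k) * lookup h m"
    by (simp add: T_def M_def Xv_power lookup_cst_mult lookup_single_mult)
  finally show ?thesis unfolding M_def .
qed

lemma StabU_y_power:
  fixes c :: "'k::field_char_0"
  assumes "c \<noteq> 0" and "k > 0"
  shows "StabU r (cst c * Xv None ^ k :: ('n::finite,'k) wpoly) = {id}"
proof (intro equalityI subsetI)
  let ?f = "cst c * Xv None ^ k :: ('n,'k) wpoly"
  fix u assume "u \<in> StabU r ?f"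
  then obtain h c' where h: "h \<in> Hr r" and u: "u = Phi (mat 1) 1 h" and "u ?f = cst c' * ?f"
    by (auto simp: StabU_def Urad_def)
  have "h = 0"
  proof (rule ccontr)
    assume "h \<noteq> 0"
    then obtain m where m: "m \<in> keys h" by fastforce
    obtain k' where k: "k = Suc k'" using assms(2) not0_implies_Suc by blast
    have "lookup m None = 0" using h m by (simp add: Hr_def)
    have "lookup (single None k' + m) None \<noteq> lookup (single None k) None"
      using \<open>lookup m None = 0\<close> k by (simp add: lookup_add)
    then have "single None k \<noteq> single None k' + m" by metis
    have "u ?f = cst c * (Xv None + h) ^ k"
      by (simp add: u Phi_eq_psubst psubst_mult psubst_power)
    then have "lookup (u ?f) (single None k' + m) = c * (of_nat k * lookup h m)"
      using lookup_y_plus_power[of h m k', folded k] h \<open>lookup m None = 0\<close>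
      by (simp add: lookup_cst_mult Hr_iff)
    moreover have "lookup (u ?f) (single None k' + m) = 0"
      using \<open>u ?f = cst c' * ?f\<close> \<open>single None k \<noteq> single None k' + m\<close>
      by (simp add: cst_mult_Xv_power lookup_cst_mult lookup_single)
    moreover have "(of_nat k :: 'k) \<noteq> 0" using assms(2) by simp
    ultimately show False using assms(1) m by (simp add: in_keys_iff)
  qed
  then show "u \<in> {id}" by (simp add: u Phi_one)
next
  fix u :: "('n,'k) wpoly \<Rightarrow> _" assume "u \<in> {id}"
  moreover have "(id :: ('n,'k) wpoly \<Rightarrow> _) = Phi (mat 1) 1 0" by (simp add: Phi_one)
  then have "(id :: ('n,'k) wpoly \<Rightarrow> _) \<in> Urad r" unfolding Urad_def using Hr_0 by blast
  ultimately show "u \<in> StabU r (cst c * Xv None ^ k :: ('n,'k) wpoly)"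
    by (auto simp: StabU_def intro!: exI[of _ 1])
qed

theorem mainTheorem13:
  fixes r d N :: nat
  assumes "r > 1" and "d > 0" and "r dvd d" and "N > 0"
  shows "(\<lambda>(A,c,h). Phi A c h) \<in> iso (SemiDir r) (AutGr r :: (('n::finite,'k::{alg_closed_field,field_char_0}) wpoly \<Rightarrow> _) monoid)
     \<and> card (xmonos r :: ('n option \<Rightarrow>\<^sub>0 nat) set) = (CARD('n) - 1 + r) choose r
     \<and> (\<forall>u\<in>Urad r. \<forall>v\<in>(Urad r :: (('n,'k) wpoly \<Rightarrow> _) set). u \<circ> v = v \<circ> u)
     \<and> {f \<in> (Vmin N r d :: ('n,'k) wpoly set). f \<noteq> 0} = {cst c * Xv None ^ (d div r) | c. c \<noteq> 0}
     \<and> (\<forall>f \<in> (Vmin N r d :: ('n,'k) wpoly set). f \<noteq> 0 \<longrightarrow> StabU r f = {id})"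
proof (intro conjI ballI impI)
  have "r > 0" using assms(1) by simp
  have Vmin: "{f \<in> (Vmin N r d :: ('n,'k) wpoly set). f \<noteq> 0} = {cst c * Xv None ^ (d div r) | c. c \<noteq> 0}"
    using Vmin_eq[OF \<open>r > 0\<close> assms(4,3)] .
  show "(\<lambda>(A,c,h). Phi A c h) \<in> iso (SemiDir r) (AutGr r :: (('n,'k) wpoly \<Rightarrow> _) monoid)"
    using Phi_iso[OF assms(1)] .
  show "card (xmonos r :: ('n option \<Rightarrow>\<^sub>0 nat) set) = (CARD('n) - 1 + r) choose r"
    by (rule card_xmonos)
  show "u \<circ> v = v \<circ> u" if "u \<in> Urad r" and "v \<in> (Urad r :: (('n,'k) wpoly \<Rightarrow> _) set)" for u v
    using Urad_comm[OF that] .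
  show "{f \<in> (Vmin N r d :: ('n,'k) wpoly set). f \<noteq> 0} = {cst c * Xv None ^ (d div r) | c. c \<noteq> 0}"
    by (rule Vmin)
  fix f :: "('n,'k) wpoly" assume "f \<in> Vmin N r d" and "f \<noteq> 0"
  then obtain c where "c \<noteq> 0" and "f = cst c * Xv None ^ (d div r)"
    using Vmin by blast
  moreover have "d div r > 0" using assms(1-3) by (auto elim: dvdE)
  ultimately show "StabU r f = {id}" using StabU_y_power by simp
qed

end
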